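(* Let $t,u$ be indeterminates. For every integer $n\ge1$, $$\sum_{|\lambda|=n} t^{2n(\lambda)-2\binom{\ell(\lambda)}{2}}\,\frac{(t;t)_{\ell(\lambda)-1}\,(u^{-1};t)_{\ell(\lambda)}}{\prod_{i\ge1}(t;t)_{m_i(\lambda)}}\,u^{\ell(\lambda)}=\frac{u^n-1}{1-t^n},$$ the sum being over all partitions $\lambda$ of $n$.
   Context: For a partition $\lambda$: $|\lambda|=\sum_i\lambda_i$, $\ell(\lambda)$ is the number of nonzero parts, $n(\lambda)=\sum_{i\ge1}(i-1)\lambda_i$, and $m_j(\lambda)=\#\{i:\lambda_i=j\}$. $(x;t)_m=\prod_{i=1}^m(1-xt^{i-1})$ with $(x;t)_0=1$. *)

theory Defs
  imports Complex_Main
begin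

definition partitions_of :: "nat \<Rightarrow> nat list set" where
  "partitions_of n = {xs. sorted_wrt (\<ge>) xs \<and> (\<forall>x\<in>set xs. 0 < x) \<and> sum_list xs = n}"

text \<open>n(lambda) = sum_{i>=1} (i-1) lambda_i (0-based list index i).\<close>
definition npart :: "nat list \<Rightarrow> nat" where
  "npart xs = (\<Sum>i<length xs. i * xs ! i)"

definition mult_part :: "nat list \<Rightarrow> nat \<Rightarrow> nat" where
  "mult_part xs j = count_list xs j"

definition qpoch :: "'a::comm_ring_1 \<Rightarrow> 'a \<Rightarrow> nat \<Rightarrow> 'a" where
  "qpoch x q m = (\<Prod>i<m. (1 - x * q ^ i))"

end

theory Submission
  imports Defs
begin

text \<open>
  Write a partition of n of length l as mu + (1^l), where mu is a partition of n - l into at most l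
  parts, padded with zeros to length l; then n(lambda) - binomial l 2 = n(mu). The summand becomes
  (t;t)_{l-1} prod_{i<l} (u - t^i) times the weight t^{2 n(mu)} / prod_{i>=0} (t;t)_{m_i(mu)}, in
  which the zeros count as parts: m_0(mu) = l - length(mu). Stripping the zeros yields a recursion for
  the total weight, solved by a q-Vandermonde identity: it equals [n-1, l-1]_t / (t;t)_l. By
  q-absorption the l-th term is then [n, l]_t prod_{i<l} (u - t^i) / (1 - t^n), and Gauss's formula
  u^n = sum_l [n, l]_t prod_{i<l} (u - t^i) sums these to (u^n - 1) / (1 - t^n).
\<close>

fun qbinomial :: "'a::comm_ring_1 \<Rightarrow> nat \<Rightarrow> nat \<Rightarrow> 'a" where
  "qbinomial t n 0 = 1"
| "qbinomial t 0 (Suc k) = 0"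
| "qbinomial t (Suc n) (Suc k) = qbinomial t n k + t ^ Suc k * qbinomial t n (Suc k)"

lemma qbinomial_eq_0: "n < k \<Longrightarrow> qbinomial t n k = 0"
  by (induction t n k rule: qbinomial.induct) auto

lemma qbinomial_same [simp]: "qbinomial t n n = 1"
  by (induction n) (auto simp: qbinomial_eq_0)

lemma qbinomial_Suc_Suc_dual:
  "qbinomial t (Suc (i + j)) (Suc i) = qbinomial t (i + j) (Suc i) + t ^ j * qbinomial t (i + j) i"
proof (induction "i + j" arbitrary: i j)
  case 0
  then show ?case by simp
next
  case (Suc m)
  note IH = Suc.hyps(1) and ij = Suc.hyps(2)
  show ?case
  proof (cases i)
    case 0
    with ij obtain j' where j: "j = Suc j'" by (cases j) auto
    have "qbinomial t (Suc j') (Suc 0) = qbinomial t j' (Suc 0) + t ^ j'"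
      using IH[of 0 j'] ij 0 j by simp
    then show ?thesis using 0 j by (simp add: algebra_simps)
  next
    case (Suc i')
    show ?thesis
    proof (cases j)
      case 0
      then show ?thesis by (simp add: qbinomial_eq_0)
    next
      case (Suc j')
      let ?B = "qbinomial t m"
      have IH_i: "qbinomial t (Suc m) i = ?B i + t ^ j * ?B i'"
        using IH[of i' j] ij \<open>i = Suc i'\<close> by simp
      have IH_j: "qbinomial t (Suc m) (Suc i) = ?B (Suc i) + t ^ j' * ?B i"
        using IH[of i j'] ij Suc by simp
      have pascal_i: "qbinomial t (Suc m) i = ?B i' + t ^ i * ?B i"
        using \<open>i = Suc i'\<close> by simp
      have exp: "t ^ Suc i * t ^ j' = t ^ j * t ^ i"
        using Suc by (simp flip: power_add)
      have "qbinomial t (Suc (Suc m)) (Suc i) = qbinomial t (Suc m) i + t ^ Suc i * qbinomial t (Suc m) (Suc i)"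
        by simp
      also have "\<dots> = ?B i + t ^ j * ?B i' + t ^ Suc i * ?B (Suc i) + (t ^ Suc i * t ^ j') * ?B i"
        by (simp only: IH_i IH_j) (simp add: algebra_simps)
      also have "\<dots> = (?B i + t ^ Suc i * ?B (Suc i)) + t ^ j * (?B i' + t ^ i * ?B i)"
        by (simp only: exp) (simp add: algebra_simps)
      also have "\<dots> = qbinomial t (Suc m) (Suc i) + t ^ j * qbinomial t (Suc m) i"
        by (simp only: pascal_i) simp
      finally show ?thesis using ij by simp
    qed
  qed
qed

lemma qbinomial_symmetric: "qbinomial t (i + j) i = qbinomial t (i + j) j"
proof (induction "i + j" arbitrary: i j)
  case 0
  then show ?case by simp
next
  case (Suc m)
  note IH = Suc.hyps(1) and ij = Suc.hyps(2)
  show ?case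
  proof (cases "i = 0 \<or> j = 0")
    case True
    then show ?thesis by auto
  next
    case False
    then obtain i' j' where i: "i = Suc i'" and j: "j = Suc j'"
      by (meson not0_implies_Suc)
    have m: "m = j' + i" "m = i' + j" "m = i + j'"
      using ij i j by simp_all
    have "qbinomial t (i + j) i = qbinomial t m i' + t ^ i * qbinomial t m i"
      using ij i by simp
    also have "\<dots> = qbinomial t m (Suc j') + t ^ i * qbinomial t m j'"
      using IH[of i' j] IH[of i j'] m j by simp
    also have "\<dots> = qbinomial t (i + j) j"
      using qbinomial_Suc_Suc_dual[of t j' i] ij m(1) j by (simp add: ac_simps)
    finally show ?thesis .
  qed
qed

lemma qpoch_0 [simp]: "qpoch x q 0 = 1"
  by (simp add: qpoch_def)

lemma qpoch_Suc: "qpoch x q (Suc m) = qpoch x q m * (1 - x * q ^ m)"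
  by (simp add: qpoch_def)

lemma qpoch_nonzero:
  fixes t :: "'a::idom"
  assumes "\<forall>k\<in>{1..n}. t ^ k \<noteq> 1" and "m \<le> n"
  shows "qpoch t t m \<noteq> 0"
proof -
  have "1 - t * t ^ i \<noteq> 0" if "i < m" for i
  proof -
    have "Suc i \<in> {1..n}" using assms(2) that by simp
    then show ?thesis using assms(1) by (metis power_Suc right_minus_eq)
  qed
  then show ?thesis
    by (simp add: qpoch_def prod_zero_iff)
qed

lemma qbinomial_mult_qpoch:
  "k \<le> n \<Longrightarrow> qbinomial t n k * qpoch t t k * qpoch t t (n - k) = qpoch t t n"
proof (induction n arbitrary: k)
  case 0
  then show ?case by simp
next
  case (Suc n)
  show ?case
  proof (cases k)
    case 0
    then show ?thesis by simp
  next
    case (Suc k')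
    have IH_k': "qbinomial t n k' * qpoch t t k' * qpoch t t (n - k') = qpoch t t n"
      using Suc.IH[of k'] Suc.prems Suc by simp
    show ?thesis
    proof (cases "k' = n")
      case True
      then show ?thesis using Suc IH_k' by (simp add: qbinomial_eq_0 qpoch_Suc)
    next
      case False
      then have kn: "Suc k' \<le> n" using Suc.prems Suc by simp
      then have n_k': "n - k' = Suc (n - Suc k')" by simp
      have exp: "t ^ Suc k' * (t * t ^ (n - Suc k')) = t * t ^ n"
        using kn by (simp flip: power_Suc power_add)
      have "qbinomial t (Suc n) k * qpoch t t k * qpoch t t (Suc n - k)
          = qbinomial t n k' * qpoch t t k' * qpoch t t (n - k') * (1 - t * t ^ k')
            + t ^ Suc k' * (qbinomial t n (Suc k') * qpoch t t (Suc k') * qpoch t t (n - Suc k'))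
              * (1 - t * t ^ (n - Suc k'))"
        using Suc n_k' by (simp add: qpoch_Suc algebra_simps)
      also have "\<dots> = qpoch t t n * (1 - t ^ Suc k' * (t * t ^ (n - Suc k')))"
        unfolding IH_k' Suc.IH[OF kn] by (simp add: algebra_simps)
      also have "\<dots> = qpoch t t (Suc n)"
        by (simp only: exp qpoch_Suc)
      finally show ?thesis .
    qed
  qed
qed

lemma qbinomial_eq_qpoch_div:
  fixes t :: "'a::field"
  assumes "\<forall>j\<in>{1..n}. t ^ j \<noteq> 1" and "k \<le> n"
  shows "qbinomial t n k = qpoch t t n / (qpoch t t k * qpoch t t (n - k))"
  using qbinomial_mult_qpoch[of k n t] qpoch_nonzero[OF assms(1), of k] qpoch_nonzero[OF assms(1), of "n - k"] assms(2)
  by (simp add: field_simps)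

lemma power_eq_sum_qbinomial_prod:
  "u ^ n = (\<Sum>k\<le>n. qbinomial t n k * (\<Prod>i<k. u - t ^ i))"
proof (induction n)
  case 0
  then show ?case by simp
next
  case (Suc n)
  define Q where "Q k = (\<Prod>i<k. u - t ^ i)" for k
  have u_Q: "u * Q k = Q (Suc k) + t ^ k * Q k" for k
    by (simp add: Q_def algebra_simps)
  have "u ^ Suc n = (\<Sum>k\<le>n. qbinomial t n k * (u * Q k))"
    using Suc by (simp add: Q_def sum_distrib_left algebra_simps)
  also have "\<dots> = (\<Sum>k\<le>n. qbinomial t n k * Q (Suc k)) + (\<Sum>k\<le>n. t ^ k * qbinomial t n k * Q k)"
    by (simp add: u_Q algebra_simps sum.distrib)
  also have "(\<Sum>k\<le>n. qbinomial t n k * Q (Suc k)) = (\<Sum>k\<le>Suc n. (case k of 0 \<Rightarrow> 0 | Suc k' \<Rightarrow> qbinomial t n k') * Q k)"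
    by (subst sum.atMost_Suc_shift) simp
  also have "(\<Sum>k\<le>n. t ^ k * qbinomial t n k * Q k) = (\<Sum>k\<le>Suc n. t ^ k * qbinomial t n k * Q k)"
    by (simp add: qbinomial_eq_0)
  also have "(\<Sum>k\<le>Suc n. (case k of 0 \<Rightarrow> 0 | Suc k' \<Rightarrow> qbinomial t n k') * Q k) + \<dots>
      = (\<Sum>k\<le>Suc n. qbinomial t (Suc n) k * Q k)"
    by (subst sum.distrib[symmetric], rule sum.cong) (auto simp: algebra_simps split: nat.split)
  finally show ?case by (simp add: Q_def)
qed

lemma qbinomial_vandermonde:
  "(\<Sum>i\<le>m. t ^ (i * (c + i)) * qbinomial t (c + d) (c + i) * qbinomial t m i) = qbinomial t (c + d + m) d"
proof (induction m arbitrary: c d)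
  case 0
  then show ?case using qbinomial_symmetric[of t c d] by simp
next
  case (Suc m)
  define f where "f i = t ^ (i * (c + i)) * qbinomial t (c + d) (c + i)" for i
  have pascal: "qbinomial t (Suc m) (Suc i) = qbinomial t m (Suc i) + t ^ (m - i) * qbinomial t m i" if "i \<le> m" for i
    using qbinomial_Suc_Suc_dual[of t i "m - i"] that by simp
  have shifted: "f (Suc i) * t ^ (m - i) = t ^ (Suc m + c) * (t ^ (i * (Suc c + i)) * qbinomial t (c + d) (Suc c + i))"
    if "i \<le> m" for i
  proof -
    have "Suc i * (c + Suc i) + (m - i) = (Suc m + c) + i * (Suc c + i)"
      using that by (simp add: algebra_simps)
    then have exp: "t ^ (Suc i * (c + Suc i)) * t ^ (m - i) = t ^ (Suc m + c) * t ^ (i * (Suc c + i))"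
      by (metis power_add)
    have "f (Suc i) * t ^ (m - i) = (t ^ (Suc i * (c + Suc i)) * t ^ (m - i)) * qbinomial t (c + d) (Suc c + i)"
      by (simp add: f_def ac_simps)
    also have "\<dots> = (t ^ (Suc m + c) * t ^ (i * (Suc c + i))) * qbinomial t (c + d) (Suc c + i)"
      by (simp only: exp)
    finally show ?thesis by (simp only: ac_simps)
  qed
  have "(\<Sum>i\<le>Suc m. f i * qbinomial t (Suc m) i)
      = f 0 + (\<Sum>i\<le>m. f (Suc i) * qbinomial t m (Suc i)) + (\<Sum>i\<le>m. f (Suc i) * t ^ (m - i) * qbinomial t m i)"
    by (subst sum.atMost_Suc_shift) (simp add: pascal sum.distrib algebra_simps del: qbinomial.simps(3))
  also have "f 0 + (\<Sum>i\<le>m. f (Suc i) * qbinomial t m (Suc i)) = (\<Sum>i\<le>Suc m. f i * qbinomial t m i)"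
    by (subst sum.atMost_Suc_shift) simp
  also have "\<dots> = (\<Sum>i\<le>m. f i * qbinomial t m i)"
    by (simp add: qbinomial_eq_0)
  also have "\<dots> = qbinomial t (c + d + m) d"
    using Suc.IH[of c d] by (simp add: f_def)
  also have "(\<Sum>i\<le>m. f (Suc i) * t ^ (m - i) * qbinomial t m i)
      = t ^ (Suc m + c) * (\<Sum>i\<le>m. t ^ (i * (Suc c + i)) * qbinomial t (c + d) (Suc c + i) * qbinomial t m i)"
    by (simp add: sum_distrib_left shifted mult.assoc)
  finally have split: "(\<Sum>i\<le>Suc m. f i * qbinomial t (Suc m) i) = qbinomial t (c + d + m) d
      + t ^ (Suc m + c) * (\<Sum>i\<le>m. t ^ (i * (Suc c + i)) * qbinomial t (c + d) (Suc c + i) * qbinomial t m i)" .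
  show ?case
  proof (cases d)
    case 0
    have "(\<Sum>i\<le>Suc m. f i * qbinomial t (Suc m) i) = (\<Sum>i\<le>Suc m. if i = 0 then 1 else 0)"
      by (rule sum.cong) (auto simp: f_def 0 qbinomial_eq_0)
    then show ?thesis by (simp add: f_def 0)
  next
    case (Suc d')
    have "(\<Sum>i\<le>m. t ^ (i * (Suc c + i)) * qbinomial t (Suc c + d') (Suc c + i) * qbinomial t m i)
        = qbinomial t (Suc c + d' + m) d'"
      using Suc.IH[of "Suc c" d'] by simp
    moreover have "qbinomial t (Suc (d' + (Suc c + m))) (Suc d')
        = qbinomial t (d' + (Suc c + m)) (Suc d') + t ^ (Suc c + m) * qbinomial t (d' + (Suc c + m)) d'"
      by (rule qbinomial_Suc_Suc_dual)
    ultimately show ?thesis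
      using split Suc by (simp add: f_def algebra_simps)
  qed
qed

text \<open>
  Partitions of N into at most b parts, padded with zeros to length b. The weight treats the zeros
  as parts, so padding a partition of length k contributes (t;t)_{b-k} to its denominator.
\<close>

definition padded_partitions :: "nat \<Rightarrow> nat \<Rightarrow> nat list set" where
  "padded_partitions b N = {xs. length xs = b \<and> sorted_wrt (\<ge>) xs \<and> sum_list xs = N}"

definition partition_weight :: "'a::field \<Rightarrow> nat list \<Rightarrow> 'a" where
  "partition_weight t xs = t ^ (2 * npart xs) / (\<Prod>i\<in>set xs. qpoch t t (count_list xs i))"

definition padded_partition_sum :: "'a::field \<Rightarrow> nat \<Rightarrow> nat \<Rightarrow> 'a" where
  "padded_partition_sum t b N = (\<Sum>xs\<in>padded_partitions b N. partition_weight t xs)"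

lemma finite_padded_partitions: "finite (padded_partitions b N)"
proof (rule finite_subset)
  show "padded_partitions b N \<subseteq> {xs. set xs \<subseteq> {..N} \<and> length xs = b}"
    by (auto simp: padded_partitions_def member_le_sum_list)
qed (simp add: finite_lists_length_eq)

lemma padded_partitions_0: "padded_partitions 0 N = (if N = 0 then {[]} else {})"
  by (auto simp: padded_partitions_def)

lemma sum_list_map_Suc: "sum_list (map Suc xs) = sum_list xs + length xs"
  using sum_list_Suc[of "\<lambda>x. x" xs] by simp

lemma sorted_wrt_replicate: "sorted_wrt R (replicate n x) \<longleftrightarrow> n \<le> 1 \<or> R x x"
  by (induction n) auto

lemma sorted_desc_eq_positives_append_zeros:
  fixes xs :: "nat list"
  assumes "sorted_wrt (\<ge>) xs"
  shows "xs = filter ((<) 0) xs @ replicate (length xs - length (filter ((<) 0) xs)) 0"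
  using assms
proof (induction xs)
  case Nil
  then show ?case by simp
next
  case (Cons x xs)
  show ?case
  proof (cases "x = 0")
    case True
    with Cons.prems have zeros: "\<forall>y\<in>set xs. y = 0" by auto
    then have "filter ((<) 0) xs = []" by (auto simp: filter_empty_conv)
    moreover have "replicate (length xs) 0 = xs" using zeros by (rule replicate_length_same)
    ultimately show ?thesis using True by simp
  next
    case False
    with Cons show ?thesis by (simp add: Suc_diff_le length_filter_le)
  qed
qed

lemma map_Suc_map_pred: "\<forall>x\<in>set xs. 0 < x \<Longrightarrow> map Suc (map (\<lambda>x. x - 1) xs) = xs"
  by (induction xs) auto

lemma bij_betw_strip_zeros:
  "bij_betw (\<lambda>(k, zs). map Suc zs @ replicate (b - k) 0)
     (SIGMA k:{..min b N}. padded_partitions k (N - k)) (padded_partitions b N)"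
proof (rule bij_betw_byWitness[where f' = "\<lambda>xs. (length (filter ((<) 0) xs), map (\<lambda>x. x - 1) (filter ((<) 0) xs))"])
  show "\<forall>p\<in>SIGMA k:{..min b N}. padded_partitions k (N - k).
      (\<lambda>xs. (length (filter ((<) 0) xs), map (\<lambda>x. x - 1) (filter ((<) 0) xs)))
        ((\<lambda>(k, zs). map Suc zs @ replicate (b - k) 0) p) = p"
    by (auto simp: padded_partitions_def filter_map comp_def)
  show "(\<lambda>(k, zs). map Suc zs @ replicate (b - k) 0) ` (SIGMA k:{..min b N}. padded_partitions k (N - k))
      \<subseteq> padded_partitions b N"
    by (auto simp: padded_partitions_def sorted_wrt_append sorted_wrt_map sorted_wrt_replicate sum_list_map_Suc)
  show "\<forall>xs\<in>padded_partitions b N.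
      (\<lambda>(k, zs). map Suc zs @ replicate (b - k) 0)
        ((\<lambda>xs. (length (filter ((<) 0) xs), map (\<lambda>x. x - 1) (filter ((<) 0) xs))) xs) = xs"
  proof
    fix xs assume "xs \<in> padded_partitions b N"
    then have "length xs = b" and "sorted_wrt (\<ge>) xs"
      by (auto simp: padded_partitions_def)
    then have "filter ((<) 0) xs @ replicate (b - length (filter ((<) 0) xs)) 0 = xs"
      using sorted_desc_eq_positives_append_zeros by metis
    then show "(\<lambda>(k, zs). map Suc zs @ replicate (b - k) 0)
        ((\<lambda>xs. (length (filter ((<) 0) xs), map (\<lambda>x. x - 1) (filter ((<) 0) xs))) xs) = xs"
      using map_Suc_map_pred[of "filter ((<) 0) xs"] by simp
  qed
  show "(\<lambda>xs. (length (filter ((<) 0) xs), map (\<lambda>x. x - 1) (filter ((<) 0) xs))) ` padded_partitions b N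
      \<subseteq> (SIGMA k:{..min b N}. padded_partitions k (N - k))"
  proof (rule image_subsetI)
    fix xs assume xs: "xs \<in> padded_partitions b N"
    define zs where "zs = map (\<lambda>x. x - 1) (filter ((<) 0) xs)"
    have pos: "map Suc zs = filter ((<) 0) xs"
      unfolding zs_def by (rule map_Suc_map_pred) simp
    have "sorted_wrt (\<ge>) (map Suc zs)"
      using xs by (simp add: pos sorted_wrt_filter padded_partitions_def)
    then have sorted: "sorted_wrt (\<ge>) zs"
      by (simp add: sorted_wrt_map)
    have "sum_list (filter ((<) 0) xs) = N"
      using xs sum_list_map_filter[of xs "(<) 0" "\<lambda>x. x"] by (simp add: padded_partitions_def)
    then have "sum_list zs + length zs = N"
      using pos by (simp flip: sum_list_map_Suc)
    moreover have "length zs \<le> b"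
      using xs length_filter_le[of "(<) 0" xs] by (simp add: zs_def padded_partitions_def)
    ultimately have "(length zs, zs) \<in> (SIGMA k:{..min b N}. padded_partitions k (N - k))"
      using sorted by (simp add: padded_partitions_def)
    then show "(length (filter ((<) 0) xs), map (\<lambda>x. x - 1) (filter ((<) 0) xs))
        \<in> (SIGMA k:{..min b N}. padded_partitions k (N - k))"
      by (simp add: zs_def)
  qed
qed

lemma npart_snoc: "npart (xs @ [x]) = npart xs + length xs * x"
proof -
  have "(\<Sum>i<length xs. i * (xs @ [x]) ! i) = npart xs"
    unfolding npart_def by (rule sum.cong) (auto simp: nth_append)
  then show ?thesis by (simp add: npart_def)
qed

lemma npart_append_replicate_0: "npart (xs @ replicate r 0) = npart xs"
proof (induction r)
  case (Suc r)
  have "xs @ replicate (Suc r) 0 = (xs @ replicate r 0) @ [0]"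
    by (simp add: replicate_append_same[symmetric] del: replicate_append_same)
  then show ?case using Suc by (simp add: npart_snoc del: append_assoc)
qed simp

lemma npart_map_Suc: "npart (map Suc zs) = npart zs + (length zs choose 2)"
proof (induction zs rule: rev_induct)
  case Nil
  then show ?case by (simp add: npart_def)
next
  case (snoc z zs)
  then show ?case by (simp add: npart_snoc numeral_2_eq_2)
qed

lemma count_list_replicate: "count_list (replicate n x) y = (if x = y then n else 0)"
  by (induction n) auto

lemma prod_qpoch_count_list_superset:
  "set xs \<subseteq> A \<Longrightarrow> finite A \<Longrightarrow>
    (\<Prod>i\<in>A. qpoch t t (count_list xs i)) = (\<Prod>i\<in>set xs. qpoch t t (count_list xs i))"
  by (rule prod.mono_neutral_right) (auto simp: count_list_0_iff)

lemma prod_qpoch_count_list_shift: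
  fixes t :: "'a::comm_ring_1"
  shows "(\<Prod>i\<in>set (map Suc zs @ replicate r 0). qpoch t t (count_list (map Suc zs @ replicate r 0) i))
    = qpoch t t r * (\<Prod>i\<in>set zs. qpoch t t (count_list zs i))"
    (is "(\<Prod>i\<in>set ?xs. _) = _")
proof -
  have "(\<Prod>i\<in>set ?xs. qpoch t t (count_list ?xs i)) = (\<Prod>i\<in>insert 0 (Suc ` set zs). qpoch t t (count_list ?xs i))"
    by (rule prod_qpoch_count_list_superset[symmetric]) auto
  also have "\<dots> = qpoch t t (count_list ?xs 0) * (\<Prod>i\<in>set zs. qpoch t t (count_list ?xs (Suc i)))"
    by (simp add: prod.reindex)
  also have "\<dots> = qpoch t t r * (\<Prod>i\<in>set zs. qpoch t t (count_list zs i))"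
    by (simp add: count_list_replicate count_list_map_conv)
  finally show ?thesis .
qed

lemma partition_weight_shift:
  "partition_weight t (map Suc zs @ replicate r 0)
    = t ^ (2 * (length zs choose 2)) / qpoch t t r * partition_weight t zs"
  unfolding partition_weight_def prod_qpoch_count_list_shift npart_append_replicate_0 npart_map_Suc
  by (simp add: distrib_left power_add mult.commute)

lemma padded_partition_sum_rec:
  "padded_partition_sum t b N
    = (\<Sum>k\<le>min b N. t ^ (2 * (k choose 2)) / qpoch t t (b - k) * padded_partition_sum t k (N - k))"
proof -
  have "padded_partition_sum t b N
      = (\<Sum>(k, zs)\<in>(SIGMA k:{..min b N}. padded_partitions k (N - k)). partition_weight t (map Suc zs @ replicate (b - k) 0))"
    unfolding padded_partition_sum_def
    by (subst sum.reindex_bij_betw[OF bij_betw_strip_zeros, symmetric]) (simp add: split_def)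
  also have "\<dots> = (\<Sum>k\<le>min b N. \<Sum>zs\<in>padded_partitions k (N - k). partition_weight t (map Suc zs @ replicate (b - k) 0))"
    by (rule sum.Sigma[symmetric]) (auto simp: finite_padded_partitions)
  also have "\<dots> = (\<Sum>k\<le>min b N. \<Sum>zs\<in>padded_partitions k (N - k). t ^ (2 * (k choose 2)) / qpoch t t (b - k) * partition_weight t zs)"
    by (intro sum.cong refl) (simp add: partition_weight_shift padded_partitions_def)
  finally show ?thesis
    by (simp add: padded_partition_sum_def sum_distrib_left)
qed

lemma padded_partition_sum_0: "padded_partition_sum t 0 N = (if N = 0 then 1 else 0)"
  by (simp add: padded_partition_sum_def padded_partitions_0 partition_weight_def npart_def)

lemma two_mult_Suc_choose_2: "2 * (Suc i choose 2) = i * Suc i"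
  by (induction i) (simp_all add: numeral_2_eq_2)

lemma padded_partition_sum_closed_form:
  fixes t :: "'a::field"
  assumes "\<forall>j\<in>{1..b}. t ^ j \<noteq> 1" and "1 \<le> b"
  shows "padded_partition_sum t b N = qbinomial t (b + N - 1) (b - 1) / qpoch t t b"
  using assms
proof (induction N arbitrary: b rule: less_induct)
  case (less N)
  note t = less.prems(1) and b = less.prems(2)
  show ?case
  proof (cases "N = 0")
    case True
    then show ?thesis using b by (subst padded_partition_sum_rec) (simp add: padded_partition_sum_0 numeral_2_eq_2)
  next
    case False
    define g where "g k = t ^ (2 * (k choose 2)) * qbinomial t b k * qbinomial t (N - 1) (k - 1)" for k
    have summand: "t ^ (2 * (k choose 2)) / qpoch t t (b - k) * padded_partition_sum t k (N - k) = g k / qpoch t t b"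
      if k: "k \<in> {1..min b N}" for k
    proof -
      have IH: "padded_partition_sum t k (N - k) = qbinomial t (N - 1) (k - 1) / qpoch t t k"
        using less.IH[of "N - k" k] t k False by auto
      have qbinomial_b_k: "qbinomial t b k = qpoch t t b / (qpoch t t k * qpoch t t (b - k))"
        using qbinomial_eq_qpoch_div[OF t] k by auto
      have "qpoch t t k \<noteq> 0" "qpoch t t (b - k) \<noteq> 0" "qpoch t t b \<noteq> 0"
        using qpoch_nonzero[OF t] k by auto
      then show ?thesis
        unfolding g_def IH qbinomial_b_k by (simp add: field_simps)
    qed
    have "padded_partition_sum t b N
        = (\<Sum>k\<in>{1..min b N}. t ^ (2 * (k choose 2)) / qpoch t t (b - k) * padded_partition_sum t k (N - k))"
      using False by (subst padded_partition_sum_rec, intro sum.mono_neutral_right)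
        (auto simp: padded_partition_sum_0 Suc_le_eq)
    also have "\<dots> = (\<Sum>k\<in>{1..min b N}. g k) / qpoch t t b"
      unfolding sum_divide_distrib by (intro sum.cong refl summand)
    also have "(\<Sum>k\<in>{1..min b N}. g k) = (\<Sum>k\<in>{1..N}. g k)"
      by (rule sum.mono_neutral_left) (auto simp: g_def qbinomial_eq_0)
    also have "(\<Sum>k\<in>{1..N}. g k) = (\<Sum>i\<le>N - 1. g (Suc i))"
    proof -
      have "{1..N} = {Suc 0..Suc (N - 1)}" using False by simp
      then show ?thesis by (simp only: sum.shift_bounds_cl_Suc_ivl atLeast0AtMost)
    qed
    also have "\<dots> = (\<Sum>i\<le>N - 1. t ^ (i * (1 + i)) * qbinomial t (1 + (b - 1)) (1 + i) * qbinomial t (N - 1) i)"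
      using b by (simp add: g_def two_mult_Suc_choose_2)
    also have "\<dots> = qbinomial t (b + N - 1) (b - 1)"
      using qbinomial_vandermonde[of t 1 "b - 1" "N - 1"] b False by simp
    finally show ?thesis .
  qed
qed

lemma sum_partitions_of:
  assumes "1 \<le> n"
  shows "(\<Sum>p\<in>partitions_of n. g p) = (\<Sum>l\<in>{1..n}. \<Sum>zs\<in>padded_partitions l (n - l). g (map Suc zs))"
proof -
  have "bij_betw (\<lambda>(l, zs). map Suc zs) (SIGMA l:{1..n}. padded_partitions l (n - l)) (partitions_of n)"
  proof (rule bij_betw_byWitness[where f' = "\<lambda>p. (length p, map (\<lambda>x. x - 1) p)"])
    show "\<forall>p\<in>SIGMA l:{1..n}. padded_partitions l (n - l). (\<lambda>p. (length p, map (\<lambda>x. x - 1) p)) ((\<lambda>(l, zs). map Suc zs) p) = p"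
      by (auto simp: padded_partitions_def comp_def)
    show "\<forall>p\<in>partitions_of n. (\<lambda>(l, zs). map Suc zs) ((\<lambda>p. (length p, map (\<lambda>x. x - 1) p)) p) = p"
      unfolding prod.case partitions_of_def by (blast intro: map_Suc_map_pred)
    show "(\<lambda>(l, zs). map Suc zs) ` (SIGMA l:{1..n}. padded_partitions l (n - l)) \<subseteq> partitions_of n"
      by (auto simp: partitions_of_def padded_partitions_def sorted_wrt_map sum_list_map_Suc)
    show "(\<lambda>p. (length p, map (\<lambda>x. x - 1) p)) ` partitions_of n \<subseteq> (SIGMA l:{1..n}. padded_partitions l (n - l))"
    proof (rule image_subsetI)
      fix p assume "p \<in> partitions_of n"
      then have sorted: "sorted_wrt (\<ge>) p" and pos: "\<forall>x\<in>set p. 0 < x" and sum: "sum_list p = n"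
        by (auto simp: partitions_of_def)
      define zs where "zs = map (\<lambda>x. x - 1) p"
      have p: "p = map Suc zs"
        unfolding zs_def using pos by (rule map_Suc_map_pred[symmetric])
      have "p \<noteq> []" using sum assms by auto
      moreover have "sum_list zs + length zs = n" using sum p by (simp add: sum_list_map_Suc)
      moreover have "sorted_wrt (\<ge>) zs" using sorted p by (simp add: sorted_wrt_map)
      ultimately have "(length zs, zs) \<in> (SIGMA l:{1..n}. padded_partitions l (n - l))"
        using p by (auto simp: padded_partitions_def Suc_le_eq)
      then show "(length p, map (\<lambda>x. x - 1) p) \<in> (SIGMA l:{1..n}. padded_partitions l (n - l))"
        by (simp add: zs_def)
    qed
  qed
  then have "(\<Sum>p\<in>partitions_of n. g p) = (\<Sum>(l, zs)\<in>(SIGMA l:{1..n}. padded_partitions l (n - l)). g (map Suc zs))"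
    by (subst sum.reindex_bij_betw[symmetric]) (simp_all add: split_def)
  also have "\<dots> = (\<Sum>l\<in>{1..n}. \<Sum>zs\<in>padded_partitions l (n - l). g (map Suc zs))"
    by (rule sum.Sigma[symmetric]) (auto simp: finite_padded_partitions)
  finally show ?thesis .
qed

lemma partition_weight_map_Suc:
  fixes t :: "'a::field"
  assumes "sum_list (map Suc zs) = n"
  shows "t ^ (2 * npart (map Suc zs) - 2 * (length zs choose 2)) / (\<Prod>i\<in>{1..n}. qpoch t t (mult_part (map Suc zs) i))
    = partition_weight t zs"
proof -
  have "set (map Suc zs) \<subseteq> {1..n}"
    using assms member_le_sum_list[of _ "map Suc zs"] by fastforce
  then have "(\<Prod>i\<in>{1..n}. qpoch t t (mult_part (map Suc zs) i))
      = (\<Prod>i\<in>set (map Suc zs). qpoch t t (count_list (map Suc zs) i))"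
    unfolding mult_part_def by (rule prod_qpoch_count_list_superset) simp
  also have "\<dots> = (\<Prod>i\<in>set zs. qpoch t t (count_list zs i))"
    using prod_qpoch_count_list_shift[of t zs 0] by simp
  finally have "(\<Prod>i\<in>{1..n}. qpoch t t (mult_part (map Suc zs) i)) = (\<Prod>i\<in>set zs. qpoch t t (count_list zs i))" .
  then show ?thesis
    by (simp add: partition_weight_def npart_map_Suc)
qed

lemma qpoch_inverse_mult_power:
  fixes u :: "'a::field"
  assumes "u \<noteq> 0"
  shows "qpoch (inverse u) t l * u ^ l = (\<Prod>i<l. u - t ^ i)"
proof -
  have "qpoch (inverse u) t l * u ^ l = (\<Prod>i<l. (1 - inverse u * t ^ i) * u)"
    by (simp add: qpoch_def prod.distrib)
  also have "\<dots> = (\<Prod>i<l. u - t ^ i)"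
    using assms by (intro prod.cong refl) (simp add: field_simps)
  finally show ?thesis .
qed

lemma qbinomial_absorption:
  fixes t :: "'a::field"
  assumes "\<forall>j\<in>{1..n}. t ^ j \<noteq> 1" and "1 \<le> l" and "l \<le> n"
  shows "qbinomial t (n - 1) (l - 1) / (1 - t ^ l) = qbinomial t n l / (1 - t ^ n)"
proof -
  obtain l' where l: "l = Suc l'" using assms(2) by (cases l) auto
  obtain n' where n: "n = Suc n'" using assms(2,3) by (cases n) auto
  have t': "\<forall>j\<in>{1..n'}. t ^ j \<noteq> 1" using assms(1) n by auto
  have "1 - t ^ n \<noteq> 0"
    using assms by auto
  have qbinomial_pred: "qbinomial t (n - 1) (l - 1) = qpoch t t n' / (qpoch t t l' * qpoch t t (n' - l'))"
    using qbinomial_eq_qpoch_div[OF t', of l'] assms(3) l n by simp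
  have qbinomial_n_l: "qbinomial t n l = qpoch t t n' * (1 - t ^ n) / (qpoch t t l' * (1 - t ^ l) * qpoch t t (n' - l'))"
    using qbinomial_eq_qpoch_div[OF assms(1,3)] l n by (simp only: qpoch_Suc power_Suc diff_Suc_Suc)
  show ?thesis
    unfolding qbinomial_pred qbinomial_n_l using \<open>1 - t ^ n \<noteq> 0\<close> by (simp add: divide_divide_eq_left ac_simps)
qed

lemma qpoch_mult_padded_partition_sum:
  fixes t :: "'a::field"
  assumes "\<forall>j\<in>{1..n}. t ^ j \<noteq> 1" and "1 \<le> l" and "l \<le> n"
  shows "qpoch t t (l - 1) * padded_partition_sum t l (n - l) = qbinomial t n l / (1 - t ^ n)"
proof -
  obtain l' where l: "l = Suc l'" using assms(2) by (cases l) auto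
  have "qpoch t t l' \<noteq> 0"
    using qpoch_nonzero[OF assms(1), of l'] assms(3) l by simp
  then have ratio: "qpoch t t (l - 1) / qpoch t t l = 1 / (1 - t ^ l)"
    using l by (simp add: qpoch_Suc)
  have "padded_partition_sum t l (n - l) = qbinomial t (n - 1) (l - 1) / qpoch t t l"
    using padded_partition_sum_closed_form[of l t "n - l"] assms by auto
  then have "qpoch t t (l - 1) * padded_partition_sum t l (n - l)
      = qpoch t t (l - 1) / qpoch t t l * qbinomial t (n - 1) (l - 1)"
    by (simp add: divide_inverse ac_simps)
  also have "\<dots> = qbinomial t (n - 1) (l - 1) / (1 - t ^ l)"
    unfolding ratio by simp
  also have "\<dots> = qbinomial t n l / (1 - t ^ n)"
    by (rule qbinomial_absorption[OF assms])
  finally show ?thesis .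
qed

lemma sum_qbinomial_prod: "(\<Sum>l\<in>{1..n}. qbinomial t n l * (\<Prod>i<l. u - t ^ i)) = u ^ n - 1"
proof -
  have "{..n} = insert 0 {1..n}" by auto
  then show ?thesis
    using power_eq_sum_qbinomial_prod[of u n t] by simp
qed

theorem mainTheorem10:
  fixes t u :: complex and n :: nat
  assumes "n \<ge> 1"
    and "u \<noteq> 0"
    and "\<forall>k\<in>{1..n}. t ^ k \<noteq> 1"
  shows "(\<Sum>p\<in>partitions_of n.
           t ^ (2 * npart p - 2 * (length p choose 2))
           * (qpoch t t (length p - 1) * qpoch (inverse u) t (length p)
              / (\<Prod>i\<in>{1..n}. qpoch t t (mult_part p i)))
           * u ^ length p)
         = (u ^ n - 1) / (1 - t ^ n)"
proof -
  define F where "F p = t ^ (2 * npart p - 2 * (length p choose 2))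
           * (qpoch t t (length p - 1) * qpoch (inverse u) t (length p)
              / (\<Prod>i\<in>{1..n}. qpoch t t (mult_part p i)))
           * u ^ length p" for p
  define Q where "Q l = (\<Prod>i<l. u - t ^ i)" for l
  have summand: "F (map Suc zs) = Q l * qpoch t t (l - 1) * partition_weight t zs"
    if "zs \<in> padded_partitions l (n - l)" and "l \<in> {1..n}" for l zs
  proof -
    have l: "length zs = l" and n: "sum_list (map Suc zs) = n"
      using that by (auto simp: padded_partitions_def sum_list_map_Suc)
    have "F (map Suc zs) = (qpoch (inverse u) t l * u ^ l) * qpoch t t (l - 1)
          * (t ^ (2 * npart (map Suc zs) - 2 * (length zs choose 2)) / (\<Prod>i\<in>{1..n}. qpoch t t (mult_part (map Suc zs) i)))"
      by (simp add: F_def l divide_inverse ac_simps)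
    then show ?thesis
      by (simp only: partition_weight_map_Suc[OF n] qpoch_inverse_mult_power[OF assms(2)] Q_def)
  qed
  have "(\<Sum>p\<in>partitions_of n. F p) = (\<Sum>l\<in>{1..n}. Q l * (qpoch t t (l - 1) * padded_partition_sum t l (n - l)))"
    unfolding sum_partitions_of[OF assms(1)] padded_partition_sum_def sum_distrib_left mult.assoc[symmetric]
    by (intro sum.cong refl summand)
  also have "\<dots> = (\<Sum>l\<in>{1..n}. qbinomial t n l * Q l) / (1 - t ^ n)"
    unfolding sum_divide_distrib
  proof (intro sum.cong refl)
    fix l assume "l \<in> {1..n}"
    then show "Q l * (qpoch t t (l - 1) * padded_partition_sum t l (n - l)) = qbinomial t n l * Q l / (1 - t ^ n)"
      using qpoch_mult_padded_partition_sum[OF assms(3), of l] by simp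
  qed
  also have "\<dots> = (u ^ n - 1) / (1 - t ^ n)"
    using sum_qbinomial_prod[of t n u] by (simp add: Q_def mult.commute)
  finally show ?thesis
    unfolding F_def .
qed

end
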